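(* For every integer $n\ge 2$, $$C_n=\frac{n+2}{2(n-1)\pi}\int_0^{\infty}\frac{t^2}{\left(t^2+\frac14\right)^{5/2}}\left[\left(2+\frac{1}{\sqrt{t^2+\frac14}}\right)^{n-1}-\left(2-\frac{1}{\sqrt{t^2+\frac14}}\right)^{n-1}\right]\mathrm{d}t .$$
   Context: $C_n=\frac{1}{n+1}\binom{2n}{n}$ denotes the $n$-th Catalan number ($n\ge 0$). *)

theory Defs
  imports "HOL-Analysis.Analysis"
begin

definition catalan :: "nat \<Rightarrow> real" where
  "catalan n = real ((2*n) choose n) / real (n + 1)"

end

theory Submission
  imports Defs
begin

text \<open>The substitution \<open>u = 1 / sqrt (t\<^sup>2 + 1/4)\<close> maps \<open>(0, \<infinity>)\<close> onto \<open>(0, 2)\<close> and turns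
  the integral into \<open>\<integral>\<^sub>0\<^sup>2 u/2 \<cdot> sqrt (4 - u\<^sup>2) \<cdot> ((2 + u)\<^sup>k - (2 - u)\<^sup>k) du\<close> with \<open>k = n - 1\<close>,
  i.e. into the integral of \<open>u/2 \<cdot> sqrt (4 - u\<^sup>2) \<cdot> (2 + u)\<^sup>k\<close> over \<open>[-2, 2]\<close>.
  The affine change \<open>u = 4y - 2\<close> makes this a combination of two Beta integrals,
  \<open>4\<^sup>k\<^sup>+\<^sup>2 (2 B(k + 5/2, 3/2) - B(k + 3/2, 3/2)) = k/(k + 3) \<cdot> 4\<^sup>k\<^sup>+\<^sup>2 B(k + 3/2, 3/2)\<close>,
  and \<open>4\<^sup>k\<^sup>+\<^sup>2 B(k + 3/2, 3/2) = 2\<pi> C\<^sub>k\<^sub>+\<^sub>1\<close> because both sides satisfy the Catalan recursion.\<close>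

lemma catalan_eq_fact: "catalan m = fact (2 * m) / (fact m ^ 2 * (real m + 1))"
  by (simp add: catalan_def binomial_fact power2_eq_square)

lemma catalan_Suc: "catalan (Suc m) = catalan m * (2 * (2 * real m + 1)) / (real m + 2)"
proof -
  have "fact (2 * Suc m) = (2 * real m + 2) * (2 * real m + 1) * (fact (2 * m) :: real)"
    by (simp add: algebra_simps)
  moreover have "fact (Suc m) = (real m + 1) * (fact m :: real)"
    by simp
  ultimately show ?thesis
    unfolding catalan_eq_fact by (simp add: divide_simps) (simp add: algebra_simps power2_eq_square)
qed

lemma Gamma_three_halves: "Gamma (3/2 :: real) = sqrt pi / 2"
proof -
  have "1/2 \<notin> (\<int>\<^sub>\<le>\<^sub>0 :: real set)"
  proof
    assume "1/2 \<in> (\<int>\<^sub>\<le>\<^sub>0 :: real set)"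
    then obtain n :: int where "1/2 = real_of_int n"
      by (auto elim: nonpos_Ints_cases)
    then have "2 * n = 1"
      by linarith
    then show False
      by presburger
  qed
  then show ?thesis
    using Gamma_plus1[of "1/2 :: real"] by (simp add: Gamma_one_half_real)
qed

lemma Beta_catalan: "4 ^ (k + 2) * Beta (real k + 3/2) (3/2) = 2 * pi * catalan (k + 1)"
proof (induction k)
  case 0
  have "Gamma (3 :: real) = 2"
    using Gamma_fact[of 2] by (simp add: numeral_eq_Suc)
  then show ?case
    by (simp add: Beta_def Gamma_three_halves catalan_def)
next
  case (Suc k)
  have "real k + 3/2 \<notin> \<int>\<^sub>\<le>\<^sub>0"
    by (auto elim!: nonpos_Ints_cases)
  from Beta_plus1_left[OF this, of "3/2"]
  have "Beta (real (Suc k) + 3/2) (3/2) = (real k + 3/2) / (real k + 3) * Beta (real k + 3/2) (3/2)"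
    by (simp add: field_simps)
  then have "4 ^ (Suc k + 2) * Beta (real (Suc k) + 3/2) (3/2)
      = 4 * (real k + 3/2) / (real k + 3) * (4 ^ (k + 2) * Beta (real k + 3/2) (3/2))"
    by (simp add: field_simps)
  also have "\<dots> = 4 * (real k + 3/2) / (real k + 3) * (2 * pi * catalan (Suc k))"
    by (simp only: Suc.IH Suc_eq_plus1)
  also have "\<dots> = 2 * pi * (catalan (Suc k) * (2 * (2 * real (Suc k) + 1)) / (real (Suc k) + 2))"
    by (simp add: field_simps)
  also have "\<dots> = 2 * pi * catalan (Suc k + 1)"
    using catalan_Suc[of "Suc k"] by simp
  finally show ?case .
qed

lemma powr_half_integer: "0 \<le> (y::real) \<Longrightarrow> y powr (real j + 1/2) = y ^ j * sqrt y"
  by (cases "y = 0") (simp_all add: powr_add powr_realpow powr_half_sqrt)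

lemma has_integral_semicircle_Beta:
  "((\<lambda>u::real. u/2 * sqrt (4 - u^2) * (2 + u) ^ k) has_integral
      4 ^ (k + 2) * (2 * Beta (real k + 5/2) (3/2) - Beta (real k + 3/2) (3/2))) {-2..2}"
proof -
  define p where "p u = u/2 * sqrt (4 - u^2) * (2 + u) ^ k" for u :: real
  define J where "J = 4 ^ (k + 1) * (2 * Beta (real k + 5/2) (3/2) - Beta (real k + 3/2) (3/2))"
  have Beta_integrals:
    "((\<lambda>y. 4 ^ (k + 1) * (2 * (y powr (real k + 5/2 - 1) * (1 - y) powr (3/2 - 1))
                          - y powr (real k + 3/2 - 1) * (1 - y) powr (3/2 - 1)))
      has_integral J) {0..1}"
    unfolding J_def by (intro has_integral_mult_right has_integral_diff has_integral_Beta_real) auto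
  have "4 ^ (k + 1) * (2 * (y powr (real k + 5/2 - 1) * (1 - y) powr (3/2 - 1))
                     - y powr (real k + 3/2 - 1) * (1 - y) powr (3/2 - 1)) = p (4 * y - 2)"
    if "y \<in> {0..1}" for y
  proof -
    have powers: "y powr (real k + 5/2 - 1) = y ^ (k + 1) * sqrt y"
      "y powr (real k + 3/2 - 1) = y ^ k * sqrt y" "(1 - y) powr (3/2 - 1) = sqrt (1 - y)"
      using that powr_half_integer[of y "k + 1"] powr_half_integer[of y k] powr_half_sqrt[of "1 - y"]
      by (simp_all add: algebra_simps)
    have "4 - (4 * y - 2)^2 = 4^2 * (y * (1 - y))"
      by (simp add: algebra_simps power2_eq_square)
    then have "sqrt (4 - (4 * y - 2)^2) = 4 * sqrt y * sqrt (1 - y)"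
      by (simp add: real_sqrt_mult)
    then show ?thesis
      unfolding p_def powers by (simp add: power_mult_distrib algebra_simps)
  qed
  then have "((\<lambda>y. p (4 * y - 2)) has_integral J) {0..1}"
    by (rule has_integral_eq[OF _ Beta_integrals])
  then have "(p has_integral 4 * J) {-2..2}"
    using has_integral_affinity_iff[where m=4 and f=p and I="4 * J" and c="-2" and a="-2" and b=2] by simp
  then show ?thesis
    unfolding p_def J_def by (simp add: mult.assoc)
qed

lemma has_integral_semicircle_moment:
  "((\<lambda>u::real. u/2 * sqrt (4 - u^2) * (2 + u) ^ k) has_integral
      2 * pi * catalan (k + 1) * real k / (real k + 3)) {-2..2}"
proof -
  have "real k + 3/2 \<notin> \<int>\<^sub>\<le>\<^sub>0"
    by (auto elim!: nonpos_Ints_cases)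
  from Beta_plus1_left[OF this, of "3/2"]
  have Beta_step: "Beta (real k + 5/2) (3/2) = (real k + 3/2) / (real k + 3) * Beta (real k + 3/2) (3/2)"
    by (simp add: field_simps)
  have "4 ^ (k + 2) * (2 * Beta (real k + 5/2) (3/2) - Beta (real k + 3/2) (3/2))
      = 2 * pi * catalan (k + 1) * real k / (real k + 3)"
    unfolding Beta_step Beta_catalan[symmetric] by (simp add: field_simps)
  then show ?thesis
    using has_integral_semicircle_Beta[of k] by (simp only:)
qed

lemma has_integral_reflect_fold:
  fixes p :: "real \<Rightarrow> 'b::banach"
  assumes p: "(p has_integral I) {-c..c}" and "0 \<le> c"
  shows "((\<lambda>x. p x + p (- x)) has_integral I) {0..c}"
proof -
  have left: "p integrable_on {-c..0}" and right: "p integrable_on {0..c}"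
    using p \<open>0 \<le> c\<close> by (auto intro: integrable_subinterval_real)
  have "((\<lambda>x. p (- x)) has_integral integral {-c..0} p) {0..c}"
    using has_integral_reflect_lemma_real[OF integrable_integral[OF left]] by simp
  from has_integral_add[OF integrable_integral[OF right] this]
  have "((\<lambda>x. p x + p (- x)) has_integral integral {0..c} p + integral {-c..0} p) {0..c}" .
  moreover have "integral {0..c} p + integral {-c..0} p = I"
    using Henstock_Kurzweil_Integration.integral_combine[OF _ \<open>0 \<le> c\<close> has_integral_integrable[OF p]]
      integral_unique[OF p] \<open>0 \<le> c\<close>
    by (simp add: add.commute)
  ultimately show ?thesis
    by simp
qed

lemma has_integral_substitution_Ioi:
  fixes h u u' :: "real \<Rightarrow> real"
  assumes "a < b" and h: "continuous_on {a..b} h"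
    and u: "\<And>t. 0 < t \<Longrightarrow> (u has_real_derivative u' t) (at t)"
    and u': "\<And>t. 0 < t \<Longrightarrow> isCont u' t"
    and u_range: "\<And>t. 0 < t \<Longrightarrow> u t \<in> {a<..<b}"
    and u_at_0: "(u \<longlongrightarrow> b) (at_right 0)" and u_at_top: "(u \<longlongrightarrow> a) at_top"
    and nonneg: "\<And>t. 0 < t \<Longrightarrow> 0 \<le> - (h (u t) * u' t)"
  shows "((\<lambda>t. - (h (u t) * u' t)) has_integral integral {a..b} h) {0..}"
proof -
  define \<Phi> where "\<Phi> v = integral {a..v} h" for v
  \<comment> \<open>An antiderivative of the integrand on \<open>(0, \<infinity>)\<close>, tending to \<open>0\<close> at \<open>0\<close> and to \<open>\<integral>\<^sub>a\<^sup>b h\<close> at \<open>\<infinity>\<close>;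
    nonnegativity lets the improper fundamental theorem yield integrability.\<close>
  define F where "F t = \<Phi> b - \<Phi> (u t)" for t
  have \<Phi>_cont: "continuous_on {a..b} \<Phi>"
    unfolding \<Phi>_def by (intro indefinite_integral_continuous_1 integrable_continuous_interval h)
  have \<Phi>_deriv: "(\<Phi> has_real_derivative h v) (at v)" if "v \<in> {a<..<b}" for v
  proof -
    have "(\<Phi> has_real_derivative h v) (at v within {a..b})"
      unfolding \<Phi>_def by (rule integral_has_real_derivative[OF h]) (use that in auto)
    moreover have "at v within {a..b} = at v"
      by (rule at_within_interior) (use that in simp)
    ultimately show ?thesis by simp
  qed
  have F_deriv: "(F has_real_derivative - (h (u t) * u' t)) (at t)" if "0 < t" for t
    using DERIV_diff[OF DERIV_const DERIV_chain2[OF \<Phi>_deriv[OF u_range] u]] that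
    unfolding F_def by simp
  have integrand_cont: "isCont (\<lambda>t. - (h (u t) * u' t)) t" if "0 < t" for t
  proof -
    have "isCont h (u t)"
      using continuous_on_interior[OF h] u_range[OF that] by simp
    then have "isCont (\<lambda>t. h (u t)) t"
      using isCont_o2 DERIV_isCont[OF u[OF that]] by blast
    then show ?thesis using u'[OF that] by (intro continuous_intros)
  qed
  have u_in: "u t \<in> {a..b}" if "0 < t" for t
    using u_range[OF that] by simp
  have "((\<lambda>t. \<Phi> (u t)) \<longlongrightarrow> \<Phi> b) (at_right 0)"
    by (rule continuous_on_tendsto_compose[OF \<Phi>_cont u_at_0])
      (use \<open>a < b\<close> eventually_mono[OF eventually_at_right_less u_in] in auto)
  then have F_at_0: "((F \<circ> real_of_ereal) \<longlongrightarrow> 0) (at_right 0)"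
    unfolding F_def by (auto intro!: tendsto_eq_intros simp: zero_ereal_def ereal_tendsto_simps)
  have "((\<lambda>t. \<Phi> (u t)) \<longlongrightarrow> \<Phi> a) at_top"
    by (rule continuous_on_tendsto_compose[OF \<Phi>_cont u_at_top])
      (use \<open>a < b\<close> eventually_mono[OF eventually_gt_at_top u_in] in auto)
  then have F_at_top: "((F \<circ> real_of_ereal) \<longlongrightarrow> integral {a..b} h) (at_left \<infinity>)"
    unfolding F_def by (auto intro!: tendsto_eq_intros simp: \<Phi>_def ereal_tendsto_simps)
  have FTC: "set_integrable lborel (einterval 0 \<infinity>) (\<lambda>t. - (h (u t) * u' t))"
    "(LBINT t=0..\<infinity>. - (h (u t) * u' t)) = integral {a..b} h - 0"
    by (rule interval_integral_FTC_nonneg[OF _ _ _ _ F_at_0 F_at_top];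
        use nonneg in \<open>auto simp: zero_ereal_def intro!: F_deriv integrand_cont\<close>)+
  have "((\<lambda>t. - (h (u t) * u' t)) has_integral integral {a..b} h) {0<..}"
    using set_borel_integral_eq_integral[OF FTC(1)] FTC(2)
    by (simp add: zero_ereal_def interval_lebesgue_integral_def has_integral_integrable_integral)
  then show ?thesis
    by (subst (asm) has_integral_spike_set_eq) (auto intro: negligible_subset[of "{0}"])
qed

lemma has_integral_semicircle_substitution:
  fixes h :: "real \<Rightarrow> real"
  assumes h: "continuous_on {0..2} h" and h_nonneg: "\<And>v. v \<in> {0<..<2} \<Longrightarrow> 0 \<le> h v"
  shows "((\<lambda>t. t / sqrt (t^2 + 1/4) ^ 3 * h (1 / sqrt (t^2 + 1/4))) has_integral integral {0..2} h) {0..}"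
proof -
  define u where "u t = 1 / sqrt (t^2 + 1/4)" for t :: real
  define u' where "u' t = - t / sqrt (t^2 + 1/4) ^ 3" for t :: real
  have pos: "0 < t^2 + 1/4" for t :: real
    by (simp add: add_nonneg_pos)
  have u_deriv: "(u has_real_derivative u' t) (at t)" for t
    unfolding u_def u'_def using pos[of t]
    by (auto intro!: derivative_eq_intros simp: field_simps power3_eq_cube)
  have u'_cont: "isCont u' t" for t
    unfolding u'_def using pos[of t] by (intro continuous_intros) auto
  have u_range: "u t \<in> {0<..<2}" if "0 < t" for t
  proof -
    have "sqrt (1/4) < sqrt (t^2 + 1/4)"
      using that by (intro real_sqrt_less_mono) simp
    then show ?thesis
      unfolding u_def using pos[of t] by (simp add: real_sqrt_divide field_simps)
  qed
  have "isCont u 0"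
    unfolding u_def using pos[of 0] by (intro continuous_intros) auto
  then have u_at_0: "(u \<longlongrightarrow> 2) (at_right 0)"
    by (simp add: isCont_def filterlim_at_split u_def real_sqrt_divide)
  have "filterlim (\<lambda>t::real. sqrt (t^2 + 1/4)) at_top at_top"
    by (rule filterlim_at_top_mono[OF filterlim_ident always_eventually]) (auto intro!: real_le_rsqrt)
  then have u_at_top: "(u \<longlongrightarrow> 0) at_top"
    unfolding u_def using tendsto_inverse_0_at_top by (simp add: inverse_eq_divide)
  have "((\<lambda>t. - (h (u t) * u' t)) has_integral integral {0..2} h) {0..}"
  proof (rule has_integral_substitution_Ioi[OF _ h u_deriv u'_cont u_range u_at_0 u_at_top])
    show "0 \<le> - (h (u t) * u' t)" if "0 < t" for t
      using h_nonneg[OF u_range[OF that]] that pos[of t] by (simp add: u'_def mult_nonpos_nonneg)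
  qed simp
  then show ?thesis
    by (simp add: u_def u'_def ac_simps)
qed

lemma semicircle_Jacobian:
  fixes t :: real
  assumes "0 \<le> t"
  shows "t / sqrt (t^2 + 1/4) ^ 3 * (1 / sqrt (t^2 + 1/4) / 2 * sqrt (4 - (1 / sqrt (t^2 + 1/4))^2))
    = t^2 / (t^2 + 1/4) powr (5/2)"
proof -
  define s where "s = sqrt (t^2 + 1/4)"
  have s_pos: "0 < s"
    unfolding s_def by (simp add: add_nonneg_pos)
  have s_sq: "t^2 + 1/4 = s^2"
    unfolding s_def by simp
  have "(t^2 + 1/4) powr (5/2) = ((t^2 + 1/4) powr (1/2)) powr 5"
    by (simp add: powr_powr)
  also have "\<dots> = s ^ 5"
    unfolding s_def by (simp add: powr_half_sqrt add_nonneg_nonneg)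
  finally have powr: "(t^2 + 1/4) powr (5/2) = s ^ 5" .
  have "(2 * t / s)^2 = 4 * t^2 / s^2"
    by (simp add: power_divide power_mult_distrib)
  also have "\<dots> = 4 - (1 / s)^2"
    using s_pos s_sq by (simp add: field_simps)
  finally have "4 - (1 / s)^2 = (2 * t / s)^2" ..
  then have sqrt: "sqrt (4 - (1 / s)^2) = 2 * t / s"
    using assms s_pos by simp
  show ?thesis
    unfolding s_def[symmetric] powr sqrt using s_pos by (simp add: field_simps power2_eq_square eval_nat_numeral)
qed

lemma has_integral_semicircle_odd_moment:
  "((\<lambda>v::real. v/2 * sqrt (4 - v^2) * ((2 + v) ^ k - (2 - v) ^ k)) has_integral
      2 * pi * catalan (k + 1) * real k / (real k + 3)) {0..2}"
  by (rule has_integral_eq[OF _ has_integral_reflect_fold[OF has_integral_semicircle_moment]])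
    (simp_all add: algebra_simps)

lemma has_integral_catalan_kernel:
  "((\<lambda>t::real. t^2 / (t^2 + 1/4) powr (5/2) *
      ((2 + 1 / sqrt (t^2 + 1/4)) ^ k - (2 - 1 / sqrt (t^2 + 1/4)) ^ k))
    has_integral 2 * pi * catalan (k + 1) * real k / (real k + 3)) {0..}"
proof -
  define g where "g v = (2 + v) ^ k - (2 - v) ^ k" for v :: real
  define h where "h v = v/2 * sqrt (4 - v^2) * g v" for v :: real
  have "0 \<le> h v" if v: "v \<in> {0<..<2}" for v
  proof -
    have "v^2 \<le> 2^2"
      using v by (intro power_mono) auto
    moreover have "(2 - v) ^ k \<le> (2 + v) ^ k"
      using v by (intro power_mono) auto
    ultimately show ?thesis
      using v by (simp add: h_def g_def)
  qed
  moreover have "continuous_on {0..2} h"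
    unfolding h_def g_def by (intro continuous_intros) auto
  ultimately have "((\<lambda>t. t / sqrt (t^2 + 1/4) ^ 3 * h (1 / sqrt (t^2 + 1/4)))
      has_integral integral {0..2} h) {0..}"
    by (intro has_integral_semicircle_substitution)
  moreover have "t / sqrt (t^2 + 1/4) ^ 3 * h (1 / sqrt (t^2 + 1/4))
      = t^2 / (t^2 + 1/4) powr (5/2) * g (1 / sqrt (t^2 + 1/4))" if "t \<in> {0..}" for t
  proof -
    from that have "0 \<le> t"
      by simp
    show ?thesis
      unfolding h_def semicircle_Jacobian[OF \<open>0 \<le> t\<close>, symmetric] by (simp only: mult.assoc)
  qed
  moreover have "integral {0..2} h = 2 * pi * catalan (k + 1) * real k / (real k + 3)"
    unfolding h_def g_def by (rule integral_unique[OF has_integral_semicircle_odd_moment])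
  ultimately show ?thesis
    unfolding g_def by (auto intro: has_integral_eq[rotated])
qed

theorem mainTheorem2:
  fixes n :: nat
  assumes "n \<ge> 2"
  shows "((\<lambda>t::real. (real n + 2) / (2 * (real n - 1) * pi) *
            (t^2 / (t^2 + 1/4) powr (5/2) *
             ((2 + 1 / sqrt (t^2 + 1/4)) ^ (n - 1) - (2 - 1 / sqrt (t^2 + 1/4)) ^ (n - 1))))
          has_integral catalan n) {0..}"
proof -
  define k where "k = n - 1"
  have k: "n = k + 1" "real n - 1 = real k" "real n + 2 = real k + 3" "0 < real k"
    using assms unfolding k_def by auto
  have "(real k + 3) / (2 * real k * pi) * (2 * pi * catalan n * real k / (real k + 3)) = catalan n"
    using k(4) by (simp add: divide_simps)
  with has_integral_mult_right[OF has_integral_catalan_kernel[of k], of "(real k + 3) / (2 * real k * pi)"]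
  show ?thesis
    unfolding k(2,3) k_def[symmetric] by (simp only: k(1)[symmetric])
qed

end
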